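(* Consider a Hex region that is completely filled with black and white stones. Changing the color of a single stone from black to white increases the number of connected components of Black's stones by at most 2.
   Context: A Hex region is a set of hexagonal cells with the usual hexagonal adjacency (each cell has at most six neighbors). Connected components of Black's stones are the maximal sets of black-occupied cells connected through chains of adjacent black cells. *)

theory Defs
  imports Main
begin

text \<open>Hexagonal cells in axial coordinates; each cell has exactly six
  neighbours in the infinite hex lattice.\<close>
type_synonym cell = "int \<times> int"

definition hex_adj :: "cell \<Rightarrow> cell \<Rightarrow> bool" where
  "hex_adj p q \<longleftrightarrow> (fst q - fst p, snd q - snd p) \<in>
     {(1,0), (-1,0), (0,1), (0,-1), (1,-1), (-1,1)}"

definition adj_in :: "cell set \<Rightarrow> (cell \<times> cell) set" where
  "adj_in S = {(p, q). p \<in> S \<and> q \<in> S \<and> hex_adj p q}"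

definition component_of :: "cell set \<Rightarrow> cell \<Rightarrow> cell set" where
  "component_of S p = {q. (p, q) \<in> (adj_in S)\<^sup>*}"

definition components :: "cell set \<Rightarrow> cell set set" where
  "components S = component_of S ` S"

end

theory Submission
  imports Defs
begin

text \<open>Removing c from Black only affects the Black components touching the six neighbours of c:
  every other component of Black - {c} is already a component of Black distinct from the one
  containing c. The six neighbours of c form three adjacent pairs, and each pair lies in a single
  component, so Black - {c} has at most three components adjacent to c. Hence one component
  (the one of c) is lost and at most three are gained.\<close>

lemma hex_adj_sym: "hex_adj p q \<Longrightarrow> hex_adj q p"
  unfolding hex_adj_def by (cases p; cases q) (auto simp: algebra_simps)

lemma sym_adj_in: "sym (adj_in S)"
  unfolding sym_def adj_in_def by (auto intro: hex_adj_sym)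

lemma adj_in_mono: "S \<subseteq> T \<Longrightarrow> adj_in S \<subseteq> adj_in T"
  unfolding adj_in_def by auto

lemma rtrancl_adj_in_sym: "(p, q) \<in> (adj_in S)\<^sup>* \<Longrightarrow> (q, p) \<in> (adj_in S)\<^sup>*"
  using sym_rtrancl[OF sym_adj_in] by (rule symD)

lemma rtrancl_adj_in_mem: "(p, q) \<in> (adj_in S)\<^sup>* \<Longrightarrow> q = p \<or> q \<in> S"
  by (induction rule: rtrancl_induct) (auto simp: adj_in_def)

lemma component_of_eq: "(p, q) \<in> (adj_in S)\<^sup>* \<Longrightarrow> component_of S p = component_of S q"
  unfolding component_of_def using rtrancl_adj_in_sym[of p q S]
  by (auto intro: rtrancl_trans)

lemma component_of_eq_if_hex_adj:
  assumes "hex_adj a b" "a \<in> S" "b \<in> S"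
  shows "component_of S a = component_of S b"
  using assms by (intro component_of_eq r_into_rtrancl) (simp add: adj_in_def)

lemma card_component_of_adjacent_pair:
  assumes "hex_adj a b"
  shows "card (component_of S ` ({a, b} \<inter> S)) \<le> 1"
proof -
  have "component_of S ` ({a, b} \<inter> S) \<subseteq> {component_of S (if a \<in> S then a else b)}"
    using component_of_eq_if_hex_adj[OF assms, of S] by auto
  then have "card (component_of S ` ({a, b} \<inter> S))
      \<le> card {component_of S (if a \<in> S then a else b)}"
    by (intro card_mono) simp_all
  then show ?thesis
    by simp
qed

lemma hex_neighbours_pairs:
  obtains a0 a1 b0 b1 d0 d1 where
    "hex_adj a0 a1" "hex_adj b0 b1" "hex_adj d0 d1"
    "{q. hex_adj q c} \<subseteq> {a0, a1} \<union> {b0, b1} \<union> {d0, d1}"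
proof -
  obtain x y where c: "c = (x, y)" by fastforce
  have "{q. hex_adj q c} \<subseteq> {(x + 1, y), (x, y + 1)} \<union> {(x - 1, y + 1), (x - 1, y)}
      \<union> {(x, y - 1), (x + 1, y - 1)}"
    by (auto simp: hex_adj_def c algebra_simps)
  moreover have "hex_adj (x + 1, y) (x, y + 1)" "hex_adj (x - 1, y + 1) (x - 1, y)"
    "hex_adj (x, y - 1) (x + 1, y - 1)"
    by (simp_all add: hex_adj_def)
  ultimately show thesis
    using that by blast
qed

lemma card_components_adjacent_le_3:
  "card (component_of S ` {q \<in> S. hex_adj q c}) \<le> 3"
proof -
  obtain a0 a1 b0 b1 d0 d1 where adj: "hex_adj a0 a1" "hex_adj b0 b1" "hex_adj d0 d1"
    and cover: "{q. hex_adj q c} \<subseteq> {a0, a1} \<union> {b0, b1} \<union> {d0, d1}"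
    using hex_neighbours_pairs by blast
  let ?A = "component_of S ` ({a0, a1} \<inter> S)"
  let ?B = "component_of S ` ({b0, b1} \<inter> S)"
  let ?D = "component_of S ` ({d0, d1} \<inter> S)"
  have "component_of S ` {q \<in> S. hex_adj q c} \<subseteq> ?A \<union> ?B \<union> ?D"
    using cover by blast
  then have "card (component_of S ` {q \<in> S. hex_adj q c}) \<le> card (?A \<union> ?B \<union> ?D)"
    by (intro card_mono) auto
  also have "\<dots> \<le> card ?A + card ?B + card ?D"
    using card_Un_le[of "?A \<union> ?B" ?D] card_Un_le[of ?A ?B] by linarith
  also have "\<dots> \<le> 3"
    using card_component_of_adjacent_pair[OF adj(1), of S]
      card_component_of_adjacent_pair[OF adj(2), of S]
      card_component_of_adjacent_pair[OF adj(3), of S] by linarith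
  finally show ?thesis .
qed

lemma component_of_remove_eq:
  assumes "p \<in> B - {c}"
    and apart: "\<forall>q \<in> component_of (B - {c}) p. \<not> hex_adj q c"
  shows "component_of (B - {c}) p = component_of B p"
proof
  show "component_of (B - {c}) p \<subseteq> component_of B p"
    unfolding component_of_def using rtrancl_mono[OF adj_in_mono[of "B - {c}" B]] by blast
next
  have "(p, q) \<in> (adj_in (B - {c}))\<^sup>*" if "(p, q) \<in> (adj_in B)\<^sup>*" for q
    using that
  proof (induction rule: rtrancl_induct)
    case base
    then show ?case by simp
  next
    case (step y z)
    then have "y \<in> B" "z \<in> B" "hex_adj y z" by (auto simp: adj_in_def)
    moreover have "y \<noteq> c" using rtrancl_adj_in_mem[OF step.IH] assms(1) by auto
    moreover have "y \<in> component_of (B - {c}) p"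
      using step.IH by (simp add: component_of_def)
    then have "z \<noteq> c" using apart \<open>hex_adj y z\<close> by blast
    ultimately have "(y, z) \<in> adj_in (B - {c})" by (auto simp: adj_in_def)
    with step.IH show ?case by (rule rtrancl_into_rtrancl)
  qed
  then show "component_of B p \<subseteq> component_of (B - {c}) p"
    unfolding component_of_def by blast
qed

lemma components_remove_subset:
  assumes "c \<in> B"
  shows "components (B - {c}) \<subseteq>
    (components B - {component_of B c}) \<union> component_of (B - {c}) ` {q \<in> B - {c}. hex_adj q c}"
proof
  fix K assume "K \<in> components (B - {c})"
  then obtain p where p: "p \<in> B - {c}" and K: "K = component_of (B - {c}) p"
    by (auto simp: components_def)
  show "K \<in> (components B - {component_of B c}) \<union>
      component_of (B - {c}) ` {q \<in> B - {c}. hex_adj q c}"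
  proof (cases "\<exists>q \<in> K. hex_adj q c")
    case True
    then obtain q where q: "q \<in> K" "hex_adj q c" by blast
    have pq: "(p, q) \<in> (adj_in (B - {c}))\<^sup>*" using q(1) by (simp add: K component_of_def)
    then have "q \<in> B - {c}" using rtrancl_adj_in_mem p by blast
    moreover have "K = component_of (B - {c}) q" using component_of_eq[OF pq] K by simp
    ultimately show ?thesis using q(2) by blast
  next
    case False
    then have K_eq: "K = component_of B p"
      using component_of_remove_eq[OF p] K by simp
    have "c \<notin> K"
      using p rtrancl_adj_in_mem[of p c "B - {c}"] by (auto simp: K component_of_def)
    moreover have "c \<in> component_of B c" by (simp add: component_of_def)
    moreover have "K \<in> components B" using K_eq p by (auto simp: components_def)
    ultimately show ?thesis by auto
  qed
qed

theorem lemma11p3: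
  fixes R Black :: "cell set" and c :: cell
  assumes "finite R"
    and "Black \<subseteq> R"
    and "c \<in> Black"
  shows "card (components (Black - {c})) \<le> card (components Black) + 2"
proof -
  let ?lost = "component_of Black c"
  let ?new = "component_of (Black - {c}) ` {q \<in> Black - {c}. hex_adj q c}"
  have fin: "finite (components Black)" "finite ?new"
    using finite_subset[OF assms(2,1)] by (simp_all add: components_def)
  have lost: "?lost \<in> components Black"
    using assms(3) by (simp add: components_def)
  have "card (components (Black - {c})) \<le> card ((components Black - {?lost}) \<union> ?new)"
    using components_remove_subset[OF assms(3)] fin by (intro card_mono) auto
  also have "\<dots> \<le> card (components Black - {?lost}) + card ?new"
    by (rule card_Un_le)
  also have "\<dots> \<le> card (components Black) + 2"
  proof -
    have "card (components Black) > 0"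
      using lost fin(1) card_gt_0_iff by blast
    moreover have "card (components Black - {?lost}) = card (components Black) - 1"
      using lost by (rule card_Diff_singleton)
    moreover have "card ?new \<le> 3"
      by (rule card_components_adjacent_le_3)
    ultimately show ?thesis by linarith
  qed
  finally show ?thesis .
qed

end
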